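(* Let $P=\langle(\mathcal Q,\le),N\rangle$ be a possibilistic disjunctive logic program and let $\alpha\in\mathcal Q$ be fixed. If $n(r)=\alpha$ for every $r\in N$ and $M'$ is an answer set of $P^*$, then $M:=\{(a,\alpha):a\in M'\}$ is a possibilistic answer set of $P$.
   Context: $(\mathcal Q,\le)$ is a finite lattice with top $\top_{\mathcal Q}$. A possibilistic disjunctive logic program is $P=\langle(\mathcal Q,\le),N\rangle$ with $N$ a finite set of possibilistic clauses $r=\beta:\mathcal A\leftarrow\mathcal B^+,not\ \mathcal B^-$ ($\beta\in\mathcal Q$; strongly negated atoms treated as fresh atoms) and constraints $\top_{\mathcal Q}:\ \leftarrow\mathcal B^+,not\ \mathcal B^-$. $n(r)=\beta$, $r^*$ the underlying clause, $P^*=\{r^*:r\in N\}$; answer sets of $P^*$ are Gelfond–Lifschitz answer sets (minimal models of the reduct), complementary atoms allowed. $\mathcal{PS}$: sets of pairs (atom, element of $\mathcal Q$) with each atom at most once; $M^*$ its set of atoms; $A\sqsubseteq B$ iff $A^*\subseteq B^*$ and $\gamma\le\delta$ whenever $(x,\gamma)\in A,(x,\delta)\in B$. Reduct $P_M=\{n(r):(\mathcal A\cap M)\leftarrow\mathcal B^+\mid r\in N,\mathcal A\cap M\ne\emptyset,\mathcal B^-\cap M=\emptyset,\mathcal B^+\subseteq M\}$. $\vdash_{PL}$ is necessity-valued possibilistic-logic inference (clauses read as weighted implications; classical axioms weighted $\top_{\mathcal Q}$; rules $(\varphi\ \gamma),(\varphi\to\psi\ \delta)\vdash(\psi\ \mathrm{GLB}\{\gamma,\delta\})$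 and $(\varphi\ \gamma),(\varphi\ \delta)\vdash(\varphi\ \epsilon)$ for $\epsilon\le\mathrm{GLB}\{\gamma,\delta\}$). $P\Vvdash_{PL}M$ iff $M^*$ is an answer set of $P^*$ and $P_{M^*}\vdash_{PL}(a\ \gamma)$ for all $(a,\gamma)\in M$. $M$ is a possibilistic answer set of $P$ iff $M^*$ is an answer set of $P^*$, $P\Vvdash_{PL}M$, and there is no $M''\in\mathcal{PS}$, $M''\ne M$, with $M\sqsubseteq M''$ and $P\Vvdash_{PL}M''$. *)

theory Defs
  imports Main
begin

text \<open>A possibilistic clause  beta : A <- B+, not B-.  Atoms have an arbitrary type 'a
  (strongly negated atoms are just further atoms).  Weights live in a finite lattice with top.\<close>

record ('a, 'q) pclause =
  pweight :: 'q
  phead   :: "'a set"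
  ppos    :: "'a set"
  pneg    :: "'a set"

definition poss_program :: "('a, 'q::{finite,lattice,order_top}) pclause set \<Rightarrow> bool" where
  "poss_program N \<longleftrightarrow> finite N \<and>
     (\<forall>r\<in>N. finite (phead r) \<and> finite (ppos r) \<and> finite (pneg r)
            \<and> (phead r = {} \<longrightarrow> pweight r = top))"

text \<open>An ordinary (disjunctive) clause: (head, positive body, negative body).\<close>
type_synonym 'a clause = "'a set \<times> 'a set \<times> 'a set"

definition underlying :: "('a, 'q) pclause \<Rightarrow> 'a clause" where
  "underlying r = (phead r, ppos r, pneg r)"

definition P_star :: "('a, 'q) pclause set \<Rightarrow> 'a clause set" where
  "P_star N = underlying ` N"

definition pos_model :: "('a set \<times> 'a set) set \<Rightarrow> 'a set \<Rightarrow> bool" where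
  "pos_model R S \<longleftrightarrow> (\<forall>(A, B)\<in>R. B \<subseteq> S \<longrightarrow> A \<inter> S \<noteq> {})"

definition GL_reduct :: "'a clause set \<Rightarrow> 'a set \<Rightarrow> ('a set \<times> 'a set) set" where
  "GL_reduct P S = {(A, Bp) | A Bp Bn. (A, Bp, Bn) \<in> P \<and> Bn \<inter> S = {}}"

definition answer_set :: "'a clause set \<Rightarrow> 'a set \<Rightarrow> bool" where
  "answer_set P S \<longleftrightarrow> pos_model (GL_reduct P S) S \<and>
     (\<forall>S'. S' \<subset> S \<longrightarrow> \<not> pos_model (GL_reduct P S) S')"

datatype 'a form = Var 'a | Bot | Neg "'a form" | Conj "'a form" "'a form"
  | Disj "'a form" "'a form" | Imp "'a form" "'a form"

primrec eval :: "('a \<Rightarrow> bool) \<Rightarrow> 'a form \<Rightarrow> bool" where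
  "eval v (Var a) = v a"
| "eval v Bot = False"
| "eval v (Neg f) = (\<not> eval v f)"
| "eval v (Conj f g) = (eval v f \<and> eval v g)"
| "eval v (Disj f g) = (eval v f \<or> eval v g)"
| "eval v (Imp f g) = (eval v f \<longrightarrow> eval v g)"

definition tautology :: "'a form \<Rightarrow> bool" where
  "tautology f \<longleftrightarrow> (\<forall>v. eval v f)"

inductive pl_derives :: "('a form \<times> 'q::{lattice,order_top}) set \<Rightarrow> 'a form \<Rightarrow> 'q \<Rightarrow> bool" where
  premise: "(f, g) \<in> \<Gamma> \<Longrightarrow> pl_derives \<Gamma> f g"
| axiom: "tautology f \<Longrightarrow> pl_derives \<Gamma> f top"
| mp: "pl_derives \<Gamma> f g \<Longrightarrow> pl_derives \<Gamma> (Imp f h) d \<Longrightarrow> pl_derives \<Gamma> h (inf g d)"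
| weaken: "pl_derives \<Gamma> f g \<Longrightarrow> pl_derives \<Gamma> f d \<Longrightarrow> e \<le> inf g d \<Longrightarrow> pl_derives \<Gamma> f e"

definition list_of :: "'a set \<Rightarrow> 'a list" where
  "list_of S = (SOME xs. set xs = S)"

definition conj_of :: "'a set \<Rightarrow> 'a form" where
  "conj_of S = foldr (\<lambda>a f. Conj (Var a) f) (list_of S) (Imp Bot Bot)"

definition disj_of :: "'a set \<Rightarrow> 'a form" where
  "disj_of S = foldr (\<lambda>a f. Disj (Var a) f) (list_of S) Bot"

definition clause_form :: "'a set \<Rightarrow> 'a set \<Rightarrow> 'a form" where
  "clause_form A B = Imp (conj_of B) (disj_of A)"

definition poss_reduct :: "('a, 'q) pclause set \<Rightarrow> 'a set \<Rightarrow> ('q \<times> 'a set \<times> 'a set) set" where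
  "poss_reduct N M = {(pweight r, phead r \<inter> M, ppos r) | r. r \<in> N \<and>
      phead r \<inter> M \<noteq> {} \<and> pneg r \<inter> M = {} \<and> ppos r \<subseteq> M}"

definition reduct_theory :: "('q \<times> 'a set \<times> 'a set) set \<Rightarrow> ('a form \<times> 'q) set" where
  "reduct_theory R = {(clause_form A B, b) | b A B. (b, A, B) \<in> R}"

definition is_PS :: "('a \<times> 'q) set \<Rightarrow> bool" where
  "is_PS M \<longleftrightarrow> (\<forall>x g d. (x, g) \<in> M \<and> (x, d) \<in> M \<longrightarrow> g = d)"

definition atoms_of :: "('a \<times> 'q) set \<Rightarrow> 'a set" where
  "atoms_of M = fst ` M"

definition ps_le :: "('a \<times> 'q::order) set \<Rightarrow> ('a \<times> 'q) set \<Rightarrow> bool" where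
  "ps_le A B \<longleftrightarrow> atoms_of A \<subseteq> atoms_of B \<and>
     (\<forall>x g d. (x, g) \<in> A \<and> (x, d) \<in> B \<longrightarrow> g \<le> d)"

definition poss_entails :: "('a, 'q::{finite,lattice,order_top}) pclause set \<Rightarrow> ('a \<times> 'q) set \<Rightarrow> bool" where
  "poss_entails N M \<longleftrightarrow> answer_set (P_star N) (atoms_of M) \<and>
     (\<forall>(a, g)\<in>M. pl_derives (reduct_theory (poss_reduct N (atoms_of M))) (Var a) g)"

definition poss_answer_set :: "('a, 'q::{finite,lattice,order_top}) pclause set \<Rightarrow> ('a \<times> 'q) set \<Rightarrow> bool" where
  "poss_answer_set N M \<longleftrightarrow> is_PS M \<and> answer_set (P_star N) (atoms_of M) \<and> poss_entails N M \<and>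
     \<not> (\<exists>M''. is_PS M'' \<and> M'' \<noteq> M \<and> ps_le M M'' \<and> poss_entails N M'')"

end

theory Submission
  imports Defs
begin

text \<open>When every clause has weight \<open>\<alpha>\<close>, the possibilistic reduct of an answer set \<open>M'\<close> is a
  finite theory all of whose formulas carry weight \<open>\<alpha>\<close>.  Minimality of \<open>M'\<close> makes every atom
  of \<open>M'\<close> a classical consequence of that theory, so chaining modus ponens over all its
  formulas from a tautology derives each atom with weight \<open>\<alpha>\<close>.  Conversely, from premises
  of weight at most \<open>\<alpha>\<close> a non-tautology is only ever derived with weight at most \<open>\<alpha>\<close>, and
  answer sets form an antichain, so no larger possibilistic set is entailed.\<close>

lemma list_of_set: "finite S \<Longrightarrow> set (list_of S) = S"
  unfolding list_of_def by (rule someI_ex) (rule finite_list)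

lemma eval_conj_of: "finite S \<Longrightarrow> eval v (conj_of S) \<longleftrightarrow> (\<forall>x\<in>S. v x)"
proof -
  have "eval v (foldr (\<lambda>a f. Conj (Var a) f) xs (Imp Bot Bot)) \<longleftrightarrow> (\<forall>x\<in>set xs. v x)" for xs
    by (induct xs) auto
  then show "finite S \<Longrightarrow> ?thesis" unfolding conj_of_def by (metis list_of_set)
qed

lemma eval_disj_of: "finite S \<Longrightarrow> eval v (disj_of S) \<longleftrightarrow> (\<exists>x\<in>S. v x)"
proof -
  have "eval v (foldr (\<lambda>a f. Disj (Var a) f) xs Bot) \<longleftrightarrow> (\<exists>x\<in>set xs. v x)" for xs
    by (induct xs) auto
  then show "finite S \<Longrightarrow> ?thesis" unfolding disj_of_def by (metis list_of_set)
qed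

lemma eval_clause_form:
  "finite A \<Longrightarrow> finite B \<Longrightarrow> eval v (clause_form A B) \<longleftrightarrow> ((\<forall>x\<in>B. v x) \<longrightarrow> (\<exists>x\<in>A. v x))"
  unfolding clause_form_def by (simp add: eval_conj_of eval_disj_of)

lemma eval_foldr_Imp: "eval v (foldr Imp cs h) \<longleftrightarrow> ((\<forall>c\<in>set cs. eval v c) \<longrightarrow> eval v h)"
  by (induct cs) auto

lemma pl_derives_weaker: "pl_derives \<Gamma> f g \<Longrightarrow> e \<le> g \<Longrightarrow> pl_derives \<Gamma> f e"
  by (rule pl_derives.weaken) auto

lemma pl_derives_foldr_Imp:
  assumes "\<forall>c\<in>set cs. pl_derives \<Gamma> c \<alpha>"
    and "pl_derives \<Gamma> (foldr Imp cs h) w"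
  shows "pl_derives \<Gamma> h (inf \<alpha> w)"
  using assms
proof (induct cs arbitrary: w)
  case Nil
  then show ?case by (auto intro: pl_derives_weaker)
next
  case (Cons c cs)
  then have "pl_derives \<Gamma> (foldr Imp cs h) (inf \<alpha> w)"
    using pl_derives.mp[of \<Gamma> c \<alpha>] by simp
  with Cons.hyps Cons.prems(1) show ?case by (fastforce simp: inf_assoc[symmetric])
qed

lemma pl_derives_entailed:
  assumes "finite \<Gamma>"
    and "\<forall>(f, g)\<in>\<Gamma>. \<alpha> \<le> g"
    and "\<forall>v. (\<forall>(f, g)\<in>\<Gamma>. eval v f) \<longrightarrow> eval v h"
  shows "pl_derives \<Gamma> h \<alpha>"
proof -
  obtain cs where cs: "set cs = fst ` \<Gamma>"
    using finite_list[of "fst ` \<Gamma>"] assms(1) by blast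
  have "tautology (foldr Imp cs h)"
    using assms(3) cs unfolding tautology_def eval_foldr_Imp by fastforce
  then have "pl_derives \<Gamma> (foldr Imp cs h) top" by (rule pl_derives.axiom)
  moreover have "pl_derives \<Gamma> c \<alpha>" if c: "c \<in> set cs" for c
  proof -
    obtain g where "(c, g) \<in> \<Gamma>" using c cs by auto
    with assms(2) show ?thesis by (blast intro: pl_derives_weaker pl_derives.premise)
  qed
  moreover have "inf \<alpha> top = \<alpha>" by (simp add: inf.absorb1)
  ultimately show ?thesis using pl_derives_foldr_Imp[of cs \<Gamma> \<alpha> h top] by auto
qed

lemma pl_derives_weight_le:
  assumes "pl_derives \<Gamma> f g"
    and "\<forall>(f', g')\<in>\<Gamma>. g' \<le> \<alpha>"
  shows "tautology f \<or> g \<le> \<alpha>"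
  using assms
proof (induct rule: pl_derives.induct)
  case (mp \<Gamma> f g h d)
  show ?case
  proof (cases "tautology h \<or> tautology (Imp f h)")
    case True
    then have "tautology h \<or> \<not> tautology f" unfolding tautology_def by auto
    with True mp show ?thesis by (auto intro: le_infI1)
  next
    case False
    with mp show ?thesis by (auto intro: le_infI2)
  qed
next
  case (weaken \<Gamma> f g d e)
  then show ?case by (auto intro: order_trans)
qed auto

lemma pos_model_mono: "pos_model R S \<Longrightarrow> R' \<subseteq> R \<Longrightarrow> pos_model R' S"
  unfolding pos_model_def by auto

lemma GL_reduct_antimono: "S \<subseteq> S' \<Longrightarrow> GL_reduct P S' \<subseteq> GL_reduct P S"
  unfolding GL_reduct_def by auto

lemma answer_set_subset_eq:
  assumes "answer_set P S1" "answer_set P S2" "S1 \<subseteq> S2"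
  shows "S1 = S2"
proof (rule ccontr)
  assume "S1 \<noteq> S2"
  with assms(3) have "S1 \<subset> S2" by auto
  moreover have "pos_model (GL_reduct P S2) S1"
    using assms(1) GL_reduct_antimono[OF assms(3)] unfolding answer_set_def
    by (blast intro: pos_model_mono)
  ultimately show False using assms(2) unfolding answer_set_def by blast
qed

lemma finite_reduct_theory:
  assumes "poss_program N"
  shows "finite (reduct_theory (poss_reduct N M))"
proof -
  have "reduct_theory (poss_reduct N M)
      \<subseteq> (\<lambda>r. (clause_form (phead r \<inter> M) (ppos r), pweight r)) ` N"
    unfolding reduct_theory_def poss_reduct_def by auto
  with assms show ?thesis unfolding poss_program_def by (meson finite_imageI finite_subset)
qed

lemma reduct_theory_weight:
  "(f, g) \<in> reduct_theory (poss_reduct N M) \<Longrightarrow> \<exists>r\<in>N. g = pweight r"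
  unfolding reduct_theory_def poss_reduct_def by auto

text \<open>A model \<open>v\<close> of the reduct theory cuts \<open>M'\<close> down to \<open>M' \<inter> v\<close>, which is still a model
  of the Gelfond--Lifschitz reduct; minimality forces it to be all of \<open>M'\<close>.\<close>

lemma answer_set_entailed_by_reduct_theory:
  assumes "poss_program N"
    and M': "answer_set (P_star N) M'"
    and v: "\<forall>(f, g)\<in>reduct_theory (poss_reduct N M'). eval v f"
  shows "M' \<subseteq> {x. v x}"
proof -
  define S where "S = M' \<inter> {x. v x}"
  have model: "pos_model (GL_reduct (P_star N) M') M'"
    using M' unfolding answer_set_def by simp
  have "pos_model (GL_reduct (P_star N) M') S"
    unfolding pos_model_def
  proof clarify
    fix A Bp
    assume red: "(A, Bp) \<in> GL_reduct (P_star N) M'" and "Bp \<subseteq> S" and "A \<inter> S = {}"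
    then obtain Bn where "(A, Bp, Bn) \<in> P_star N" "Bn \<inter> M' = {}"
      unfolding GL_reduct_def by blast
    then obtain r where r: "r \<in> N" "phead r = A" "ppos r = Bp" "pneg r \<inter> M' = {}"
      unfolding P_star_def underlying_def by auto
    have "A \<inter> M' \<noteq> {}"
      using model red \<open>Bp \<subseteq> S\<close> unfolding pos_model_def S_def by auto
    then have "(pweight r, A \<inter> M', Bp) \<in> poss_reduct N M'"
      using r \<open>Bp \<subseteq> S\<close> unfolding poss_reduct_def S_def by auto
    then have "eval v (clause_form (A \<inter> M') Bp)"
      using v unfolding reduct_theory_def by auto
    moreover have "finite A" "finite Bp"
      using assms(1) r unfolding poss_program_def by auto
    ultimately show False
      using \<open>Bp \<subseteq> S\<close> \<open>A \<inter> S = {}\<close> by (auto simp: eval_clause_form S_def)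
  qed
  moreover have "\<not> S \<subset> M'"
    using M' calculation unfolding answer_set_def by blast
  ultimately have "S = M'" unfolding S_def by blast
  then show ?thesis unfolding S_def by blast
qed

lemma poss_entails_uniform_weight:
  assumes "poss_program N"
    and "\<forall>r\<in>N. pweight r = \<alpha>"
    and M': "answer_set (P_star N) M'"
  shows "poss_entails N {(a, \<alpha>) | a. a \<in> M'}"
proof -
  have atoms: "atoms_of {(a, \<alpha>) | a. a \<in> M'} = M'"
    unfolding atoms_of_def by force
  have "pl_derives (reduct_theory (poss_reduct N M')) (Var a) \<alpha>" if "a \<in> M'" for a
  proof (rule pl_derives_entailed)
    show "finite (reduct_theory (poss_reduct N M'))"
      using assms(1) by (rule finite_reduct_theory)
    show "\<forall>(f, g)\<in>reduct_theory (poss_reduct N M'). \<alpha> \<le> g"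
      using assms(2) by (auto dest!: reduct_theory_weight)
    show "\<forall>v. (\<forall>(f, g)\<in>reduct_theory (poss_reduct N M'). eval v f) \<longrightarrow> eval v (Var a)"
      using answer_set_entailed_by_reduct_theory[OF assms(1) M'] that by auto
  qed
  then show ?thesis
    unfolding poss_entails_def atoms using M' by auto
qed

lemma poss_entails_weight_le:
  assumes "\<forall>r\<in>N. pweight r = \<alpha>"
    and "poss_entails N M"
    and "(x, d) \<in> M"
  shows "d \<le> \<alpha>"
proof -
  let ?\<Gamma> = "reduct_theory (poss_reduct N (atoms_of M))"
  have "pl_derives ?\<Gamma> (Var x) d"
    using assms(2,3) unfolding poss_entails_def by auto
  moreover have "\<forall>(f, g)\<in>?\<Gamma>. g \<le> \<alpha>"
    using assms(1) by (auto dest!: reduct_theory_weight)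
  moreover have "\<not> tautology (Var x)"
    unfolding tautology_def by (auto intro: exI[of _ "\<lambda>_. False"])
  ultimately show ?thesis by (blast dest: pl_derives_weight_le)
qed

lemma poss_entails_uniform_weight_maximal:
  assumes "\<forall>r\<in>N. pweight r = \<alpha>"
    and M': "answer_set (P_star N) M'"
    and larger: "ps_le {(a, \<alpha>) | a. a \<in> M'} M''"
    and entails: "poss_entails N M''"
  shows "M'' = {(a, \<alpha>) | a. a \<in> M'}"
proof -
  have "atoms_of {(a, \<alpha>) | a. a \<in> M'} = M'" unfolding atoms_of_def by force
  with larger have "M' \<subseteq> atoms_of M''" unfolding ps_le_def by simp
  then have atoms: "atoms_of M'' = M'"
    using answer_set_subset_eq[OF M'] entails unfolding poss_entails_def by (metis (no_types))
  have weight: "d = \<alpha>" if "(x, d) \<in> M''" for x d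
  proof (rule order_antisym)
    show "d \<le> \<alpha>" using poss_entails_weight_le[OF assms(1) entails that] .
    have "x \<in> M'" using that atoms unfolding atoms_of_def by force
    then show "\<alpha> \<le> d" using larger that unfolding ps_le_def by blast
  qed
  show ?thesis
  proof (intro set_eqI iffI)
    fix p assume "p \<in> M''"
    moreover obtain x d where "p = (x, d)" by fastforce
    ultimately show "p \<in> {(a, \<alpha>) | a. a \<in> M'}"
      using weight atoms unfolding atoms_of_def by force
  next
    fix p assume "p \<in> {(a, \<alpha>) | a. a \<in> M'}"
    then obtain x where p: "p = (x, \<alpha>)" and "x \<in> atoms_of M''" using atoms by blast
    then obtain d where "(x, d) \<in> M''" unfolding atoms_of_def by force
    with p weight show "p \<in> M''" by blast
  qed
qed

theorem proposition4:
  fixes N :: "('a, 'q::{finite,lattice,order_top}) pclause set"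
    and \<alpha> :: 'q and M' :: "'a set"
  assumes "poss_program N"
    and "\<forall>r\<in>N. pweight r = \<alpha>"
    and "answer_set (P_star N) M'"
  shows "poss_answer_set N {(a, \<alpha>) | a. a \<in> M'}"
proof -
  have "is_PS {(a, \<alpha>) | a. a \<in> M'}" unfolding is_PS_def by auto
  moreover have "atoms_of {(a, \<alpha>) | a. a \<in> M'} = M'" unfolding atoms_of_def by force
  ultimately show ?thesis
    using assms(3) poss_entails_uniform_weight[OF assms]
      poss_entails_uniform_weight_maximal[OF assms(2,3)]
    unfolding poss_answer_set_def by auto
qed

end
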